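(* Let $s\in\{3,4\}$ and consider an $s$-stage explicit Runge–Kutta method with coefficients $a_{ij}$ (with $a_{ij}=0$ for $j\ge i$) and $b_i>0$, which is of order $s$ in OCP. Let $c_i=\sum_{j=1}^s a_{ij}$ and $\bar c_i=\sum_{j=1}^s\bar a_{ij}$ where $\bar a_{ij}=b_j-\frac{b_ja_{ji}}{b_i}$. Then $c_i=\bar c_i$ for all $i=1,\dots,s$.
   Context: A Runge–Kutta method with coefficients $a_{ij}$, $b_i>0$ is of order $r$ in OCP if the partitioned Runge–Kutta method consisting of the method $(a_{ij},b_i)$ for the first component and the method $(\bar a_{ij},\bar b_i)$ with $\bar a_{ij}=b_j-b_ja_{ji}/b_i$, $\bar b_i=b_i$ for the second component has classical order $r$. *)

theory Defs
  imports Main "HOL.Real"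
begin

text \<open>Bi-coloured rooted trees, used for the classical order conditions of
partitioned Runge-Kutta methods.  Colour True = first component (method (a,b)),
colour False = second component (method (abar,bbar)).  Stages are indexed 0..s-1.\<close>

datatype btree = BNode bool "btree list"

fun bcol :: "btree \<Rightarrow> bool" where
  "bcol (BNode c ts) = c"

fun bsize :: "btree \<Rightarrow> nat" where
  "bsize (BNode c ts) = Suc (sum_list (map bsize ts))"

fun bgamma :: "btree \<Rightarrow> nat" where
  "bgamma (BNode c ts) = bsize (BNode c ts) * prod_list (map bgamma ts)"

fun bphi :: "nat \<Rightarrow> (nat \<Rightarrow> nat \<Rightarrow> real) \<Rightarrow> (nat \<Rightarrow> nat \<Rightarrow> real) \<Rightarrow> btree \<Rightarrow> nat \<Rightarrow> real" where
  "bphi s a abar (BNode c ts) i =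
     prod_list (map (\<lambda>t. \<Sum>j<s. (if bcol t then a i j else abar i j) * bphi s a abar t j) ts)"

definition prk_order :: "nat \<Rightarrow> (nat \<Rightarrow> nat \<Rightarrow> real) \<Rightarrow> (nat \<Rightarrow> real)
     \<Rightarrow> (nat \<Rightarrow> nat \<Rightarrow> real) \<Rightarrow> (nat \<Rightarrow> real) \<Rightarrow> nat \<Rightarrow> bool" where
  "prk_order s a b abar bbar r \<longleftrightarrow>
     (\<forall>t. bsize t \<le> r \<longrightarrow>
        (\<Sum>i<s. (if bcol t then b i else bbar i) * bphi s a abar t i) = 1 / real (bgamma t))"

definition ocp_abar :: "(nat \<Rightarrow> nat \<Rightarrow> real) \<Rightarrow> (nat \<Rightarrow> real) \<Rightarrow> nat \<Rightarrow> nat \<Rightarrow> real" where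
  "ocp_abar a b i j = b j - b j * a j i / b i"

definition ocp_order :: "nat \<Rightarrow> (nat \<Rightarrow> nat \<Rightarrow> real) \<Rightarrow> (nat \<Rightarrow> real) \<Rightarrow> nat \<Rightarrow> bool" where
  "ocp_order s a b r \<longleftrightarrow> prk_order s a b (ocp_abar a b) b r"

end

theory Submission
  imports Defs
begin

text \<open>The three order conditions on the trees with a root and two leaves, coloured
  (a; a, a), (a; a, abar) and (abar; abar, abar), say that
  \<open>\<Sum> b c\<^sup>2\<close>, \<open>\<Sum> b c cbar\<close> and \<open>\<Sum> b cbar\<^sup>2\<close> all equal 1/3, because both components
  share the weights b.  Hence \<open>\<Sum> b (c - cbar)\<^sup>2 = 0\<close>, and positivity of b forces
  \<open>c = cbar\<close>.\<close>

lemma prk_order_cherry: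
  assumes "prk_order s a b abar bbar r" and "3 \<le> r"
  shows "(\<Sum>i<s. (if root then b i else bbar i)
            * (\<Sum>j<s. if left then a i j else abar i j)
            * (\<Sum>j<s. if right then a i j else abar i j)) = 1 / 3"
proof -
  let ?t = "BNode root [BNode left [], BNode right []]"
  have "bsize ?t \<le> r"
    using assms(2) by simp
  then have "(\<Sum>i<s. (if bcol ?t then b i else bbar i) * bphi s a abar ?t i) = 1 / real (bgamma ?t)"
    using assms(1) unfolding prk_order_def by blast
  then show ?thesis
    by (simp add: mult.assoc)
qed

lemma sum_weighted_squares_eq_0_imp_eq:
  fixes x y w :: "nat \<Rightarrow> real"
  assumes "(\<Sum>i<s. w i * (x i - y i)\<^sup>2) = 0" and "\<And>i. i < s \<Longrightarrow> w i > 0" and "i < s"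
  shows "x i = y i"
proof -
  have "0 \<le> w j * (x j - y j)\<^sup>2" if "j < s" for j
    using assms(2)[OF that] by simp
  then have "\<forall>i\<in>{..<s}. w i * (x i - y i)\<^sup>2 = 0"
    using assms(1) by (subst sum_nonneg_eq_0_iff[symmetric]) auto
  then have "w i * (x i - y i)\<^sup>2 = 0"
    using assms(3) by blast
  then show ?thesis
    using assms(2)[OF assms(3)] by simp
qed

lemma prk_order_equal_weights_row_sums_eq:
  fixes a abar :: "nat \<Rightarrow> nat \<Rightarrow> real"
  assumes "prk_order s a b abar b r" and "3 \<le> r" and "\<And>i. i < s \<Longrightarrow> b i > 0"
  shows "\<forall>i<s. (\<Sum>j<s. a i j) = (\<Sum>j<s. abar i j)"
proof -
  define c where "c i = (\<Sum>j<s. a i j)" for i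
  define cbar where "cbar i = (\<Sum>j<s. abar i j)" for i
  have cc: "(\<Sum>i<s. b i * c i * c i) = 1 / 3"
    using prk_order_cherry[OF assms(1,2), of True True True] by (simp add: c_def)
  have ccbar: "(\<Sum>i<s. b i * c i * cbar i) = 1 / 3"
    using prk_order_cherry[OF assms(1,2), of True True False] by (simp add: c_def cbar_def)
  have cbarcbar: "(\<Sum>i<s. b i * cbar i * cbar i) = 1 / 3"
    using prk_order_cherry[OF assms(1,2), of False False False] by (simp add: cbar_def)
  have "(\<Sum>i<s. b i * (c i - cbar i)\<^sup>2)
      = (\<Sum>i<s. b i * c i * c i) - 2 * (\<Sum>i<s. b i * c i * cbar i) + (\<Sum>i<s. b i * cbar i * cbar i)"
    by (simp add: power2_eq_square algebra_simps sum.distrib sum_subtractf sum_distrib_left)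
  also have "\<dots> = 0"
    using cc ccbar cbarcbar by simp
  finally show ?thesis
    using sum_weighted_squares_eq_0_imp_eq[OF _ assms(3)] by (auto simp: c_def cbar_def)
qed

theorem proposition3p8:
  fixes s :: nat and a :: "nat \<Rightarrow> nat \<Rightarrow> real" and b :: "nat \<Rightarrow> real"
  assumes "s \<in> {3, 4}"
    and "\<And>i j. i < s \<Longrightarrow> j < s \<Longrightarrow> i \<le> j \<Longrightarrow> a i j = 0"
    and "\<And>i. i < s \<Longrightarrow> b i > 0"
    and "ocp_order s a b s"
  shows "\<forall>i<s. (\<Sum>j<s. a i j) = (\<Sum>j<s. ocp_abar a b i j)"
proof -
  have "3 \<le> s"
    using assms(1) by auto
  with assms(3,4) show ?thesis
    unfolding ocp_order_def by (intro prk_order_equal_weights_row_sums_eq)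
qed

end
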